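(* Let $\lambda,\rho\in\mathbb{N}$ with $\lambda<\rho$. Then the class of monotone conjunctions on $\{0,1\}^n$ (and any concept class containing it) is not distribution-free $\rho$-robustly learnable with access to the example oracle and a $\lambda$-local equivalence query oracle.
   Context: A monotone conjunction is $x\mapsto\bigwedge_{i\in I}x_i$ for nonempty $I\subseteq[n]$. $B_r(x)$ is the Hamming ball of radius $r$ around $x\in\{0,1\}^n$. The example oracle $\mathsf{EX}(c,D)$ returns $(x,c(x))$, $x\sim D$. Given a sample $S$ from $\mathsf{EX}(c,D)$, the $\lambda$-local equivalence query oracle, queried with a point $x\in S$ and a hypothesis $h$, either confirms that $h$ and the target $c$ coincide on $B_\lambda(x)$ or returns some $z\in B_\lambda(x)$ with $c(z)\ne h(z)$; the learner may update $h$ after each counterexample. Robust risk: $\mathsf{R}_\rho(h,c)=\Pr_{x\sim D}[\exists z\in B_\rho(x):h(z)\ne c(z)]$. Distribution-free $\rho$-robust learnability means there is a learner which, for every distribution $D$ on $\{0,1\}^n$, every target $c$ in the class and every $\epsilon,\delta>0$, outputs with probability at least $1-\delta$ a hypothesis $h$ with $\mathsf{R}_\rho(h,c)\le\epsilon$. *)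

theory Defs
  imports "HOL-Probability.Probability"
begin

text \<open>Points of the Boolean hypercube {0,1}^n are Boolean lists of length n;
  concepts / hypotheses are arbitrary Boolean functions on Boolean lists
  (only their values on {0,1}^n matter).\<close>

type_synonym point = "bool list"
type_synonym concept = "point \<Rightarrow> bool"

definition cube :: "nat \<Rightarrow> point set" where
  "cube n = {x. length x = n}"

definition hamming :: "point \<Rightarrow> point \<Rightarrow> nat" where
  "hamming x z = card {i. i < length x \<and> x ! i \<noteq> z ! i}"

definition hball :: "nat \<Rightarrow> point \<Rightarrow> point set" where
  "hball r x = {z. length z = length x \<and> hamming x z \<le> r}"

definition mon_conj :: "nat \<Rightarrow> concept set" where
  "mon_conj n = {(\<lambda>x. \<forall>i\<in>I. x ! i) | I. I \<noteq> {} \<and> I \<subseteq> {..<n}}"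

definition robust_risk :: "nat \<Rightarrow> point pmf \<Rightarrow> concept \<Rightarrow> concept \<Rightarrow> real" where
  "robust_risk \<rho> D h c = measure_pmf.prob D {x. \<exists>z\<in>hball \<rho> x. h z \<noteq> c z}"

text \<open>The oracle's choice of
  counterexample is arbitrary (adversarial).\<close>
definition valid_leq :: "nat \<Rightarrow> concept \<Rightarrow> (point \<Rightarrow> concept \<Rightarrow> point option) \<Rightarrow> bool" where
  "valid_leq lam c Orc \<longleftrightarrow>
     (\<forall>x h. (Orc x h = None \<longrightarrow> (\<forall>z\<in>hball lam x. h z = c z)) \<and>
            (\<forall>z. Orc x h = Some z \<longrightarrow> z \<in> hball lam x \<and> h z \<noteq> c z))"

text \<open>Learners as (well-founded, possibly infinitely branching) interaction trees:
  output a hypothesis, draw a labelled example from EX(c,D), ask a local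
  equivalence query on a point with a hypothesis, or use internal randomness.\<close>
datatype learner =
    Output concept
  | Draw "point \<times> bool \<Rightarrow> learner"
  | Query point concept "point option \<Rightarrow> learner"
  | Rand "nat pmf" "nat \<Rightarrow> learner"

text \<open>Execution of a learner; the list S is the sample drawn so far.  A query on
  a point that is not in the sample is illegal and counts as failure (None).\<close>
primrec run :: "point pmf \<Rightarrow> concept \<Rightarrow> (point \<Rightarrow> concept \<Rightarrow> point option)
                 \<Rightarrow> learner \<Rightarrow> point list \<Rightarrow> concept option pmf" where
  "run D c Orc (Output h) S = return_pmf (Some h)"
| "run D c Orc (Draw f) S = bind_pmf D (\<lambda>x. run D c Orc (f (x, c x)) (S @ [x]))"
| "run D c Orc (Query x h f) S =
     (if x \<in> set S then run D c Orc (f (Orc x h)) S else return_pmf None)"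
| "run D c Orc (Rand p f) S = bind_pmf p (\<lambda>k. run D c Orc (f k) S)"

definition robustly_learnable_LEQ :: "nat \<Rightarrow> nat \<Rightarrow> (nat \<Rightarrow> concept set) \<Rightarrow> bool" where
  "robustly_learnable_LEQ lam \<rho> C \<longleftrightarrow>
     (\<forall>n. \<forall>\<epsilon>::real. \<forall>\<delta>::real. \<epsilon> > 0 \<longrightarrow> \<delta> > 0 \<longrightarrow>
       (\<exists>L. \<forall>D c Orc. set_pmf D \<subseteq> cube n \<longrightarrow> c \<in> C n \<longrightarrow> valid_leq lam c Orc \<longrightarrow>
          measure_pmf.prob (run D c Orc L []) {Some h | h. robust_risk \<rho> D h c \<le> \<epsilon>}
            \<ge> 1 - \<delta>))"

end

theory Submission
  imports Defs
begin

(* Put all the mass of D on the origin of the cube of dimension lam + 2 and compare the targets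
  x_1 & ... & x_(lam+1) and x_1 & ... & x_(lam+2). Both vanish on the lam-ball around the origin,
  so the sample (always the origin) and all answers of a local equivalence query oracle that only
  looks at that ball are the same for both targets, and so is the output distribution of any
  learner. Under a point mass, robust risk below 1 means exact agreement with the target on the
  whole rho-ball around the origin, which contains the point 1...10 separating the two targets.
  Hence the two success events are disjoint and cannot both have probability 3/4. *)

definition canonical_leq :: "nat \<Rightarrow> concept \<Rightarrow> point \<Rightarrow> concept \<Rightarrow> point option" where
  "canonical_leq lam c x h =
     (if \<forall>z\<in>hball lam x. h z = c z then None
      else Some (SOME z. z \<in> hball lam x \<and> h z \<noteq> c z))"

lemma valid_leq_canonical_leq: "valid_leq lam c (canonical_leq lam c)"
  unfolding valid_leq_def
proof (intro allI conjI impI)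
  fix x h z
  show "\<forall>z\<in>hball lam x. h z = c z" if "canonical_leq lam c x h = None"
    using that unfolding canonical_leq_def by (simp split: if_splits)
  assume "canonical_leq lam c x h = Some z"
  then have "\<exists>z. z \<in> hball lam x \<and> h z \<noteq> c z"
    and "z = (SOME z. z \<in> hball lam x \<and> h z \<noteq> c z)"
    unfolding canonical_leq_def by (auto split: if_splits)
  then have "z \<in> hball lam x \<and> h z \<noteq> c z"
    using someI_ex[of "\<lambda>z. z \<in> hball lam x \<and> h z \<noteq> c z"] by simp
  then show "z \<in> hball lam x" "h z \<noteq> c z"
    by simp_all
qed

lemma canonical_leq_cong:
  assumes "\<And>z. z \<in> hball lam x \<Longrightarrow> c1 z = c2 z"
  shows "canonical_leq lam c1 x = canonical_leq lam c2 x"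
proof -
  have "(\<lambda>z. z \<in> hball lam x \<and> h z \<noteq> c1 z) = (\<lambda>z. z \<in> hball lam x \<and> h z \<noteq> c2 z)" for h
    using assms by auto
  then show ?thesis
    using assms unfolding canonical_leq_def by auto
qed

lemma run_cong_on_support:
  assumes "\<And>x. x \<in> set_pmf D \<Longrightarrow> c1 x = c2 x"
    and "\<And>x. x \<in> set_pmf D \<Longrightarrow> Orc1 x = Orc2 x"
    and "set S \<subseteq> set_pmf D"
  shows "run D c1 Orc1 L S = run D c2 Orc2 L S"
  using assms(3)
proof (induction L arbitrary: S)
  case (Draw f)
  then show ?case
    using assms(1) by (auto intro!: bind_pmf_cong)
next
  case (Query x h f)
  then show ?case
    using assms(2) by auto
next
  case (Rand p f)
  then show ?case
    by (auto intro!: bind_pmf_cong)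
qed simp

lemma center_in_hball: "x \<in> hball r x"
  by (simp add: hball_def hamming_def)

lemma learner_for_point_mass:
  fixes \<epsilon> \<delta> :: real
  assumes "robustly_learnable_LEQ lam \<rho> C" "x \<in> cube n" "0 < \<epsilon>" "0 < \<delta>"
  obtains L where "\<And>c. c \<in> C n \<Longrightarrow> 1 - \<delta> \<le> measure_pmf.prob
      (run (return_pmf x) c (canonical_leq lam c) L []) {Some h | h. robust_risk \<rho> (return_pmf x) h c \<le> \<epsilon>}"
proof -
  have "\<exists>L. \<forall>D c Orc. set_pmf D \<subseteq> cube n \<longrightarrow> c \<in> C n \<longrightarrow> valid_leq lam c Orc \<longrightarrow>
      1 - \<delta> \<le> measure_pmf.prob (run D c Orc L []) {Some h | h. robust_risk \<rho> D h c \<le> \<epsilon>}"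
    using assms(1) unfolding robustly_learnable_LEQ_def
    by (elim allE[of _ n] allE[of _ \<epsilon>] allE[of _ \<delta>]) (simp add: assms(3,4))
  then obtain L where "\<And>D c Orc. set_pmf D \<subseteq> cube n \<Longrightarrow> c \<in> C n \<Longrightarrow> valid_leq lam c Orc \<Longrightarrow>
      1 - \<delta> \<le> measure_pmf.prob (run D c Orc L []) {Some h | h. robust_risk \<rho> D h c \<le> \<epsilon>}"
    by blast
  moreover have "set_pmf (return_pmf x) \<subseteq> cube n"
    using assms(2) by simp
  ultimately show ?thesis
    using that valid_leq_canonical_leq by blast
qed

lemma robust_risk_return_pmf:
  "robust_risk \<rho> (return_pmf x) h c = (if \<forall>z\<in>hball \<rho> x. h z = c z then 0 else 1)"
  by (simp add: robust_risk_def)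

lemma success_probs_indistinguishable_le_1:
  fixes \<epsilon> :: real
  assumes agree: "\<And>z. z \<in> hball lam x \<Longrightarrow> c z = c' z"
    and z: "z \<in> hball \<rho> x" "c z \<noteq> c' z"
    and "\<epsilon> < 1"
  shows "measure_pmf.prob (run (return_pmf x) c (canonical_leq lam c) L [])
           {Some h | h. robust_risk \<rho> (return_pmf x) h c \<le> \<epsilon>}
       + measure_pmf.prob (run (return_pmf x) c' (canonical_leq lam c') L [])
           {Some h | h. robust_risk \<rho> (return_pmf x) h c' \<le> \<epsilon>} \<le> 1"
    (is "measure_pmf.prob ?P1 ?E1 + measure_pmf.prob ?P2 ?E2 \<le> 1")
proof -
  have "?P1 = ?P2"
    using agree center_in_hball by (intro run_cong_on_support canonical_leq_cong) auto
  moreover have "?E1 \<inter> ?E2 = {}"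
    using z \<open>\<epsilon> < 1\<close> by (auto simp: robust_risk_return_pmf split: if_splits)
  ultimately have "measure_pmf.prob ?P1 ?E1 + measure_pmf.prob ?P2 ?E2
      = measure_pmf.prob ?P1 (?E1 \<union> ?E2)"
    by (simp add: measure_pmf.finite_measure_Union)
  also have "\<dots> \<le> 1"
    by (rule measure_pmf.prob_le_1)
  finally show ?thesis .
qed

definition prefix_conj :: "nat \<Rightarrow> concept" where
  "prefix_conj k = (\<lambda>x. \<forall>i<k. x ! i)"

lemma prefix_conj_in_mon_conj:
  assumes "0 < k" "k \<le> n"
  shows "prefix_conj k \<in> mon_conj n"
  unfolding mon_conj_def prefix_conj_def using assms
  by (intro CollectI exI[of _ "{..<k}"]) auto

lemma hamming_replicate_False:
  assumes "length z = n"
  shows "hamming (replicate n False) z = card {i. i < n \<and> z ! i}"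
  unfolding hamming_def using assms by (intro arg_cong[where f = card]) auto

lemma prefix_conj_vanishes_near_origin:
  assumes "z \<in> hball r (replicate n False)" "r < k" "k \<le> n"
  shows "\<not> prefix_conj k z"
proof
  assume "prefix_conj k z"
  then have "{..<k} \<subseteq> {i. i < n \<and> z ! i}"
    using \<open>k \<le> n\<close> by (auto simp: prefix_conj_def)
  then have "k \<le> card {i. i < n \<and> z ! i}"
    using card_mono[of "{i. i < n \<and> z ! i}" "{..<k}"] by simp
  also have "\<dots> = hamming (replicate n False) z"
    using assms(1) by (simp add: hball_def hamming_replicate_False)
  also have "\<dots> \<le> r"
    using assms(1) by (simp add: hball_def)
  finally show False
    using \<open>r < k\<close> by simp
qed

lemma separating_point_in_hball:
  "replicate k True @ [False] \<in> hball k (replicate (Suc k) False)"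
proof -
  have "{i. i < Suc k \<and> (replicate k True @ [False]) ! i} = {..<k}"
    by (auto simp: nth_append less_Suc_eq)
  then show ?thesis
    using hamming_replicate_False[of "replicate k True @ [False]" "Suc k"]
    by (simp add: hball_def del: replicate_Suc)
qed

lemma prefix_conj_separating_point:
  "prefix_conj k (replicate k True @ [False])"
  "\<not> prefix_conj (Suc k) (replicate k True @ [False])"
  by (auto simp: prefix_conj_def nth_append)

theorem theorem6p2:
  fixes lam \<rho> :: nat and C :: "nat \<Rightarrow> (bool list \<Rightarrow> bool) set"
  assumes "lam < \<rho>"
    and "\<And>n. mon_conj n \<subseteq> C n"
  shows "\<not> robustly_learnable_LEQ lam \<rho> C"
proof
  define n where "n = Suc (Suc lam)"
  define x where "x = replicate n False"
  define z where "z = replicate (Suc lam) True @ [False]"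
  define c1 where "c1 = prefix_conj (Suc lam)"
  define c2 where "c2 = prefix_conj (Suc (Suc lam))"
  assume "robustly_learnable_LEQ lam \<rho> C"
  moreover have "x \<in> cube n"
    by (simp add: x_def cube_def)
  ultimately obtain L where L: "\<And>c. c \<in> C n \<Longrightarrow> 1 - 1/4 \<le> measure_pmf.prob
      (run (return_pmf x) c (canonical_leq lam c) L []) {Some h | h. robust_risk \<rho> (return_pmf x) h c \<le> 1/2}"
    by (rule learner_for_point_mass[of lam \<rho> C x n "1/2" "1/4"]) auto
  have "c1 \<in> C n" "c2 \<in> C n"
    using subsetD[OF assms(2) prefix_conj_in_mon_conj] unfolding n_def c1_def c2_def by auto
  have agree: "c1 y = c2 y" if "y \<in> hball lam x" for y
    using prefix_conj_vanishes_near_origin[OF that[unfolded x_def]] unfolding n_def c1_def c2_def by simp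
  have separated: "z \<in> hball \<rho> x" "c1 z \<noteq> c2 z"
    using separating_point_in_hball[of "Suc lam"] prefix_conj_separating_point[of "Suc lam"] \<open>lam < \<rho>\<close>
    unfolding x_def n_def z_def c1_def c2_def by (auto simp: hball_def)
  have "(1/2 :: real) < 1"
    by simp
  from success_probs_indistinguishable_le_1[where lam = lam and c = c1 and c' = c2 and L = L, OF agree separated this]
    L[OF \<open>c1 \<in> C n\<close>] L[OF \<open>c2 \<in> C n\<close>] show False
    by linarith
qed

end
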